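(* Let $G$ be a graph and $X,Y\subseteq V(G)$ disjoint such that $(X,Y)$ is induced $M_2$-free. Then for every integer $r\ge1$ there is an equipartition $X=X_1\cup\dots\cup X_r$ and a partition $Y=Y_1\cup\dots\cup Y_{r+1}$ (parts possibly empty) such that $(X_i,Y_j)$ is homogeneous for every $1\le i\le r$ and $1\le j\le r+1$ with $i\ne j$.
   Context: For disjoint $X,Y\subseteq V(G)$, an induced copy of $M_2$ in $(X,Y)$ is an unordered quadruple $x,x',y,y'$ with $x,x'\in X$, $y,y'\in Y$, $(x,y),(x',y')\in E(G)$ and $(x,y'),(x',y)\notin E(G)$; $(X,Y)$ is induced $M_2$-free if it contains no such copy. A pair $(A,B)$ of disjoint vertex sets is homogeneous if the bipartite graph of $G$ between $A$ and $B$ is complete or empty. A partition $\{P_1,\dots,P_r\}$ is an equipartition if $||P_i|-|P_j||\le1$ for all $i,j$. *)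

theory Defs
  imports Main
begin

definition simple_graph :: "'a set \<Rightarrow> ('a \<Rightarrow> 'a \<Rightarrow> bool) \<Rightarrow> bool" where
  "simple_graph V E \<longleftrightarrow> finite V \<and> (\<forall>u v. E u v \<longrightarrow> E v u) \<and> (\<forall>v. \<not> E v v)
     \<and> (\<forall>u v. E u v \<longrightarrow> u \<in> V \<and> v \<in> V)"

definition induced_M2_free :: "('a \<Rightarrow> 'a \<Rightarrow> bool) \<Rightarrow> 'a set \<Rightarrow> 'a set \<Rightarrow> bool" where
  "induced_M2_free E X Y \<longleftrightarrow>
     \<not> (\<exists>x\<in>X. \<exists>x'\<in>X. \<exists>y\<in>Y. \<exists>y'\<in>Y. E x y \<and> E x' y' \<and> \<not> E x y' \<and> \<not> E x' y)"

definition homogeneous :: "('a \<Rightarrow> 'a \<Rightarrow> bool) \<Rightarrow> 'a set \<Rightarrow> 'a set \<Rightarrow> bool" where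
  "homogeneous E A B \<longleftrightarrow> (\<forall>a\<in>A. \<forall>b\<in>B. E a b) \<or> (\<forall>a\<in>A. \<forall>b\<in>B. \<not> E a b)"

definition indexed_partition :: "'a set \<Rightarrow> nat \<Rightarrow> (nat \<Rightarrow> 'a set) \<Rightarrow> bool" where
  "indexed_partition S k P \<longleftrightarrow> (\<Union>i\<in>{1..k}. P i) = S
     \<and> (\<forall>i\<in>{1..k}. \<forall>j\<in>{1..k}. i \<noteq> j \<longrightarrow> P i \<inter> P j = {})"

definition equipartition :: "'a set \<Rightarrow> nat \<Rightarrow> (nat \<Rightarrow> 'a set) \<Rightarrow> bool" where
  "equipartition S k P \<longleftrightarrow> indexed_partition S k P
     \<and> (\<forall>i\<in>{1..k}. \<forall>j\<in>{1..k}. card (P i) \<le> card (P j) + 1)"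

end

theory Submission
  imports Defs
begin

text \<open>Induced \<open>M\<^sub>2\<close>-freeness says exactly that the neighbourhoods in \<open>Y\<close> of the vertices of
  \<open>X\<close> form a chain. Sort \<open>X\<close> by neighbourhood size and cut it into \<open>r\<close> consecutive blocks
  of almost equal size, so that neighbourhoods grow from block to block. A vertex \<open>y \<in> Y\<close>
  goes to \<open>Y\<^sub>j\<close> for the least \<open>j\<close> such that \<open>y\<close> has a neighbour in \<open>X\<^sub>1 \<union> \<dots> \<union> X\<^sub>j\<close>
  (and to \<open>Y\<^sub>r\<^sub>+\<^sub>1\<close> if there is none). Then \<open>y\<close> has no neighbour in the blocks before \<open>j\<close>,
  and it is adjacent to everything in the blocks after \<open>j\<close>, because their neighbourhoods
  contain that of its neighbour.\<close>

definition nbhd :: "('a \<Rightarrow> 'a \<Rightarrow> bool) \<Rightarrow> 'a set \<Rightarrow> 'a \<Rightarrow> 'a set" where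
  "nbhd E Y x = {y\<in>Y. E x y}"

lemma induced_M2_free_nbhd_chain:
  assumes "induced_M2_free E X Y" "x \<in> X" "x' \<in> X"
  shows "nbhd E Y x \<subseteq> nbhd E Y x' \<or> nbhd E Y x' \<subseteq> nbhd E Y x"
  using assms unfolding induced_M2_free_def nbhd_def by blast

lemma induced_M2_free_nbhd_mono_card:
  assumes "induced_M2_free E X Y" "finite Y" "x \<in> X" "x' \<in> X"
    and "card (nbhd E Y x) \<le> card (nbhd E Y x')"
  shows "nbhd E Y x \<subseteq> nbhd E Y x'"
proof (rule ccontr)
  assume "\<not> nbhd E Y x \<subseteq> nbhd E Y x'"
  then have "nbhd E Y x' \<subset> nbhd E Y x"
    using induced_M2_free_nbhd_chain[OF assms(1,3,4)] by blast
  moreover have "finite (nbhd E Y x)" using \<open>finite Y\<close> unfolding nbhd_def by simp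
  ultimately have "card (nbhd E Y x') < card (nbhd E Y x)" by (rule psubset_card_mono[rotated])
  with assms(5) show False by simp
qed

lemma nested_blocks_homogeneous_partition:
  fixes f :: "'a \<Rightarrow> nat"
  assumes f_range: "\<forall>x\<in>X. f x \<in> {1..r}"
    and nested: "\<And>x a y. x \<in> X \<Longrightarrow> a \<in> X \<Longrightarrow> f x < f a \<Longrightarrow> y \<in> Y \<Longrightarrow> E x y \<Longrightarrow> E a y"
  shows "\<exists>YP. indexed_partition Y (r + 1) YP
           \<and> (\<forall>i\<in>{1..r}. \<forall>j\<in>{1..r+1}. i \<noteq> j \<longrightarrow> homogeneous E {x\<in>X. f x = i} (YP j))"
proof -
  define reached where "reached y j \<longleftrightarrow> j = r + 1 \<or> (\<exists>x\<in>X. f x \<le> j \<and> E x y)" for y j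
  define g where "g y = (LEAST j. reached y j)" for y
  define YP where "YP j = {y\<in>Y. g y = j}" for j
  have reached_g: "reached y (g y)" for y
    unfolding g_def by (rule LeastI[of _ "r + 1"]) (simp add: reached_def)
  have g_le: "g y \<le> j" if "reached y j" for y j
    unfolding g_def using that by (rule Least_le)
  have g_range: "g y \<in> {1..r+1}" for y
  proof -
    have "g y \<le> r + 1" by (rule g_le) (simp add: reached_def)
    moreover have "g y \<noteq> 0" using reached_g[of y] f_range unfolding reached_def by fastforce
    ultimately show ?thesis by simp
  qed
  have "indexed_partition Y (r + 1) YP"
    using g_range unfolding indexed_partition_def YP_def by auto
  moreover have "homogeneous E {x\<in>X. f x = i} (YP j)"
    if i: "i \<in> {1..r}" and "i \<noteq> j" for i j
  proof (cases "i < j")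
    case True
    have "\<not> E a y" if "a \<in> X" "f a = i" "y \<in> YP j" for a y
    proof
      assume "E a y"
      with that have "g y \<le> i" by (intro g_le) (auto simp: reached_def)
      with \<open>i < j\<close> \<open>y \<in> YP j\<close> show False by (simp add: YP_def)
    qed
    then show ?thesis unfolding homogeneous_def by blast
  next
    case False
    with \<open>i \<noteq> j\<close> i have "j < i" "j \<noteq> r + 1" by auto
    have "E a y" if a: "a \<in> X" "f a = i" and y: "y \<in> YP j" for a y
    proof -
      from y reached_g[of y] \<open>j \<noteq> r + 1\<close> obtain x where "x \<in> X" "f x \<le> j" "E x y"
        unfolding YP_def reached_def by auto
      with a y \<open>j < i\<close> show "E a y" by (intro nested[of x a y]) (auto simp: YP_def)
    qed
    then show ?thesis unfolding homogeneous_def by blast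
  qed
  ultimately show ?thesis by blast
qed

text \<open>\<open>balanced_size r n k\<close> says \<open>\<bar>r k - n\<bar> < r\<close>, i.e. \<open>k\<close> is \<open>\<lfloor>n/r\<rfloor>\<close> or \<open>\<lceil>n/r\<rceil>\<close>.\<close>

definition balanced_size :: "nat \<Rightarrow> nat \<Rightarrow> nat \<Rightarrow> bool" where
  "balanced_size r n k \<longleftrightarrow> r * k < n + r \<and> n < r * k + r"

lemma balanced_size_le:
  assumes "balanced_size r n a" "balanced_size r n b"
  shows "a \<le> b + 1"
proof -
  from assms have "r * a < r * (b + 2)" by (simp add: balanced_size_def algebra_simps)
  then have "a < b + 2" using mult_left_less_imp_less by blast
  then show ?thesis by simp
qed

lemma balanced_size_first_block: "balanced_size (Suc r) n (n div Suc r)"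
proof -
  have "n = Suc r * (n div Suc r) + n mod Suc r" "n mod Suc r < Suc r"
    by (metis div_mult_mod_eq mult.commute) simp
  then show ?thesis unfolding balanced_size_def by linarith
qed

lemma balanced_size_after_first_block:
  assumes "balanced_size r (n - n div Suc r) k"
  shows "balanced_size (Suc r) n k"
proof -
  define q where "q = n div Suc r"
  define m where "m = n mod Suc r"
  have n: "n = Suc r * q + m" and "m \<le> r"
    unfolding q_def m_def by (metis div_mult_mod_eq mult.commute) (simp add: less_Suc_eq_le)
  then have nq: "n - q = r * q + m" by simp
  from assms have k_lower: "r * k < r * q + m + r" and k_upper: "r * q + m < r * k + r"
    unfolding balanced_size_def q_def[symmetric] nq by simp_all
  have "r * k < r * (q + 2)" using k_lower \<open>m \<le> r\<close> by (simp add: algebra_simps)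
  then have "k < q + 2" using mult_left_less_imp_less by blast
  moreover have "r * q < r * (k + 1)" using k_upper by (simp add: algebra_simps)
  then have "q < k + 1" using mult_left_less_imp_less by blast
  ultimately consider "k = q" | "k = q + 1" by linarith
  then show ?thesis
  proof cases
    case 2
    then have "0 < m" using k_lower by (simp add: algebra_simps)
    with 2 n \<open>m \<le> r\<close> show ?thesis unfolding balanced_size_def by (simp add: algebra_simps)
  qed (use n \<open>m \<le> r\<close> in \<open>simp add: balanced_size_def\<close>)
qed

lemma sorted_list_balanced_blocks:
  fixes c :: "'a \<Rightarrow> nat"
  assumes "1 \<le> r" "sorted (map c xs)" "distinct xs"
  shows "\<exists>f. (\<forall>x\<in>set xs. f x \<in> {1..r})
    \<and> (\<forall>i\<in>{1..r}. balanced_size r (length xs) (card {x\<in>set xs. f x = i}))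
    \<and> (\<forall>x\<in>set xs. \<forall>y\<in>set xs. f x < f y \<longrightarrow> c x \<le> c y)"
  using assms
proof (induction r arbitrary: xs rule: nat_induct_at_least)
  case base
  then show ?case
    by (intro exI[of _ "\<lambda>_. 1"]) (auto simp: balanced_size_def distinct_card)
next
  case (Suc r)
  define q where "q = length xs div Suc r"
  define A where "A = take q xs"
  define B where "B = drop q xs"
  have xs_AB: "xs = A @ B" unfolding A_def B_def by simp
  have "distinct A" "distinct B" "set A \<inter> set B = {}"
    using Suc.prems(2) xs_AB by (metis distinct_append)+
  have "sorted (map c B)" and A_below_B: "\<forall>x\<in>set A. \<forall>y\<in>set B. c x \<le> c y"
    using Suc.prems(1) xs_AB by (auto simp: sorted_append)
  obtain g where g_range: "\<forall>x\<in>set B. g x \<in> {1..r}"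
    and g_balanced: "\<forall>i\<in>{1..r}. balanced_size r (length B) (card {x\<in>set B. g x = i})"
    and g_mono: "\<forall>x\<in>set B. \<forall>y\<in>set B. g x < g y \<longrightarrow> c x \<le> c y"
    using Suc.IH[OF \<open>sorted (map c B)\<close> \<open>distinct B\<close>] by blast
  define f where "f x = (if x \<in> set A then 1 else Suc (g x))" for x
  have set_xs: "set xs = set A \<union> set B" using xs_AB by simp
  show ?case
  proof (intro exI[of _ f] conjI ballI impI)
    fix x assume "x \<in> set xs"
    then show "f x \<in> {1..Suc r}" using g_range set_xs f_def by auto
  next
    fix x y assume "x \<in> set xs" "y \<in> set xs" "f x < f y"
    then show "c x \<le> c y" using set_xs g_mono A_below_B \<open>set A \<inter> set B = {}\<close>
      unfolding f_def by (auto split: if_splits)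
  next
    fix i assume i: "i \<in> {1..Suc r}"
    show "balanced_size (Suc r) (length xs) (card {x\<in>set xs. f x = i})"
    proof (cases "i = 1")
      case True
      then have "{x\<in>set xs. f x = i} = set A" using set_xs g_range by (auto simp: f_def)
      then have "card {x\<in>set xs. f x = i} = q"
        using \<open>distinct A\<close> distinct_card unfolding A_def q_def by fastforce
      then show ?thesis using balanced_size_first_block q_def by simp
    next
      case False
      then obtain j where j: "i = Suc j" "j \<in> {1..r}" using i by (cases i) auto
      then have "{x\<in>set xs. f x = i} = {x\<in>set B. g x = j}"
        using set_xs \<open>set A \<inter> set B = {}\<close> by (auto simp: f_def)
      moreover have "length B = length xs - length xs div Suc r" unfolding B_def q_def by simp
      ultimately show ?thesis
        using balanced_size_after_first_block g_balanced j by metis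
    qed
  qed
qed

lemma balanced_monotone_labelling:
  fixes c :: "'a \<Rightarrow> nat"
  assumes "finite X" "r \<ge> 1"
  shows "\<exists>f. (\<forall>x\<in>X. f x \<in> {1..r}) \<and> equipartition X r (\<lambda>i. {x\<in>X. f x = i})
           \<and> (\<forall>x\<in>X. \<forall>y\<in>X. f x < f y \<longrightarrow> c x \<le> c y)"
proof -
  obtain xs0 where "set xs0 = X" "distinct xs0" using finite_distinct_list[OF \<open>finite X\<close>] by blast
  define xs where "xs = sort_key c xs0"
  have xs: "set xs = X" "distinct xs" "sorted (map c xs)"
    using \<open>set xs0 = X\<close> \<open>distinct xs0\<close> unfolding xs_def by auto
  obtain f where f_range: "\<forall>x\<in>X. f x \<in> {1..r}"
    and f_balanced: "\<forall>i\<in>{1..r}. balanced_size r (length xs) (card {x\<in>X. f x = i})"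
    and f_mono: "\<forall>x\<in>X. \<forall>y\<in>X. f x < f y \<longrightarrow> c x \<le> c y"
    using sorted_list_balanced_blocks[OF \<open>r \<ge> 1\<close> xs(3,2)] xs(1) by blast
  have "equipartition X r (\<lambda>i. {x\<in>X. f x = i})"
    unfolding equipartition_def indexed_partition_def
    using f_range balanced_size_le f_balanced by fastforce
  with f_range f_mono show ?thesis by blast
qed

theorem lemma2p2:
  fixes V :: "'a set" and E :: "'a \<Rightarrow> 'a \<Rightarrow> bool" and X Y :: "'a set" and r :: nat
  assumes "simple_graph V E"
    and "X \<subseteq> V" and "Y \<subseteq> V" and "X \<inter> Y = {}"
    and "induced_M2_free E X Y"
    and "r \<ge> 1"
  shows "\<exists>XP YP. equipartition X r XP \<and> indexed_partition Y (r + 1) YP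
           \<and> (\<forall>i\<in>{1..r}. \<forall>j\<in>{1..r+1}. i \<noteq> j \<longrightarrow> homogeneous E (XP i) (YP j))"
proof -
  have "finite X" "finite Y"
    using assms(1-3) unfolding simple_graph_def by (auto intro: finite_subset)
  obtain f where f_range: "\<forall>x\<in>X. f x \<in> {1..r}"
    and equi: "equipartition X r (\<lambda>i. {x\<in>X. f x = i})"
    and f_mono: "\<forall>x\<in>X. \<forall>a\<in>X. f x < f a \<longrightarrow> card (nbhd E Y x) \<le> card (nbhd E Y a)"
    using balanced_monotone_labelling[OF \<open>finite X\<close> \<open>r \<ge> 1\<close>,
        where c = "\<lambda>x. card (nbhd E Y x)"] by blast
  have nested: "E a y" if "x \<in> X" "a \<in> X" "f x < f a" "y \<in> Y" "E x y" for x a y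
  proof -
    have "card (nbhd E Y x) \<le> card (nbhd E Y a)" using f_mono that(1-3) by blast
    with that(1,2) have "nbhd E Y x \<subseteq> nbhd E Y a"
      by (rule induced_M2_free_nbhd_mono_card[OF assms(5) \<open>finite Y\<close>])
    with that(4,5) show "E a y" by (auto simp: nbhd_def)
  qed
  have "\<exists>YP. indexed_partition Y (r + 1) YP
      \<and> (\<forall>i\<in>{1..r}. \<forall>j\<in>{1..r+1}. i \<noteq> j \<longrightarrow> homogeneous E {x\<in>X. f x = i} (YP j))"
    using nested by (rule nested_blocks_homogeneous_partition[OF f_range])
  with equi show ?thesis by blast
qed

end
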